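(* Let $p\in[1,\infty)$, let $N\subseteq\mathbb{N}$ be nonempty, and let $M:=\{0\}\cup\{\tfrac1k e_{(k,\pm1)}:k\in N\}\cup\{\tfrac1k e_{(k,+1)}:k\in\mathbb{N}\setminus N\}\subseteq\ell^p$, with the metric induced by $\|\cdot\|_p$. Let $n\in\mathbb{N}$ with $n>1$, and let $C\subseteq M$ consist of $n$ points of $M$ of largest $\ell^p$ norm (i.e., $|C|=n$ and every point of $M\setminus C$ has norm at most the minimum norm of points of $C$). Then $C$ is an optimal code in $M$ and is unique up to isometry.
   Context: The standard basis of $\ell^p$ is indexed as $e_{(k,+1)}:=e_{2k-1}$ and $e_{(k,-1)}:=e_{2k}$ for $k\in\mathbb{N}$. $M$ is compact. An optimal code of size $n$ is an $n$-element subset of $M$ maximizing the minimum distance between distinct points; unique up to isometry means every optimal code of size $n$ is the image of $C$ under an isometry of $M$. *)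

theory Defs
  imports "HOL-Analysis.Analysis"
begin

text \<open>Points of l^p are real sequences indexed by nat; the standard basis vector
  e_j (j >= 1) is the indicator of coordinate j (coordinate 0 is never used).\<close>

definition std_e :: "nat \<Rightarrow> nat \<Rightarrow> real" where
  "std_e j = (\<lambda>i. if i = j then 1 else 0)"

text \<open>e_(k,+1) = e_(2k-1), e_(k,-1) = e_(2k)\<close>
definition e_pm :: "nat \<Rightarrow> bool \<Rightarrow> nat \<Rightarrow> real" where
  "e_pm k s = std_e (if s then 2 * k - 1 else 2 * k)"

definition lp_dist :: "real \<Rightarrow> (nat \<Rightarrow> real) \<Rightarrow> (nat \<Rightarrow> real) \<Rightarrow> real" where
  "lp_dist p x y = (\<Sum>\<^sub>\<infinity>i. \<bar>x i - y i\<bar> powr p) powr (1 / p)"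

definition lp_norm :: "real \<Rightarrow> (nat \<Rightarrow> real) \<Rightarrow> real" where
  "lp_norm p x = lp_dist p x (\<lambda>_. 0)"

definition space_M :: "nat set \<Rightarrow> (nat \<Rightarrow> real) set" where
  "space_M N = {\<lambda>_. 0}
     \<union> {(\<lambda>i. (1 / real k) * e_pm k s i) | k s. k \<in> N}
     \<union> {(\<lambda>i. (1 / real k) * e_pm k True i) | k. 1 \<le> k \<and> k \<notin> N}"

definition min_dist :: "('a \<Rightarrow> 'a \<Rightarrow> real) \<Rightarrow> 'a set \<Rightarrow> real" where
  "min_dist d C = Min {d x y | x y. x \<in> C \<and> y \<in> C \<and> x \<noteq> y}"

definition optimal_code :: "('a \<Rightarrow> 'a \<Rightarrow> real) \<Rightarrow> 'a set \<Rightarrow> nat \<Rightarrow> 'a set \<Rightarrow> bool" where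
  "optimal_code d M n C \<longleftrightarrow> C \<subseteq> M \<and> finite C \<and> card C = n \<and>
     (\<forall>D. D \<subseteq> M \<and> finite D \<and> card D = n \<longrightarrow> min_dist d D \<le> min_dist d C)"

definition isometry_of :: "('a \<Rightarrow> 'a \<Rightarrow> real) \<Rightarrow> 'a set \<Rightarrow> ('a \<Rightarrow> 'a) \<Rightarrow> bool" where
  "isometry_of d M f \<longleftrightarrow> bij_betw f M M \<and> (\<forall>x\<in>M. \<forall>y\<in>M. d (f x) (f y) = d x y)"

definition unique_up_to_isometry :: "('a \<Rightarrow> 'a \<Rightarrow> real) \<Rightarrow> 'a set \<Rightarrow> nat \<Rightarrow> 'a set \<Rightarrow> bool" where
  "unique_up_to_isometry d M n C \<longleftrightarrow>
     (\<forall>D. optimal_code d M n D \<longrightarrow> (\<exists>f. isometry_of d M f \<and> f ` C = D))"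

end

theory Submission
  imports Defs
begin

text \<open>Distinct points of M are supported on distinct single coordinates, so the distance of
  two of them is \<open>(|x|^p + |y|^p)^(1/p)\<close>: a symmetric function of their norms, strictly
  increasing in each. The minimum distance of C is therefore attained by its two points of
  smallest norms \<open>\<mu> \<le> \<nu>\<close>. Any other n-point code D contains a point x outside C, of norm at
  most \<open>\<mu>\<close>, and, by counting, a second point of norm at most \<open>\<nu>\<close>, so it is no better than C.
  If D is optimal too, all its other points have norm at least \<open>\<nu>\<close>; as at most two points of
  M share a norm, counting forces x to have norm \<open>\<mu>\<close> and D to be C with its point of norm
  \<open>\<mu>\<close> exchanged for x, and exchanging two points of equal norm is an isometry of M.\<close>

section \<open>Optimal codes for distances depending only on radii\<close>

lemma finite_min_dist_set:
  "finite D \<Longrightarrow> finite {d x y | x y. x \<in> D \<and> y \<in> D \<and> x \<noteq> y}"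
  by (rule finite_subset[of _ "case_prod d ` (D \<times> D)"]) auto

lemma min_dist_le:
  assumes "finite D" "x \<in> D" "y \<in> D" "x \<noteq> y"
  shows "min_dist d D \<le> d x y"
  unfolding min_dist_def using assms by (intro Min_le finite_min_dist_set) auto

lemma min_dist_eqI:
  assumes "finite D" "x \<in> D" "y \<in> D" "x \<noteq> y"
    and "\<And>u v. u \<in> D \<Longrightarrow> v \<in> D \<Longrightarrow> u \<noteq> v \<Longrightarrow> d x y \<le> d u v"
  shows "min_dist d D = d x y"
  unfolding min_dist_def using assms by (intro Min_eqI finite_min_dist_set) auto

lemma ex_min_on_finite:
  fixes f :: "'a \<Rightarrow> 'b::linorder"
  assumes "finite S" "S \<noteq> {}"
  shows "\<exists>a\<in>S. \<forall>c\<in>S. f a \<le> f c"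
  using ex_is_arg_min_if_finite[OF assms, of f] by (auto simp: is_arg_min_linorder)

lemma transpose_image_exchange:
  assumes "x \<notin> C" "a \<in> C"
  shows "Transposition.transpose x a ` C = insert x (C - {a})"
proof -
  have "Transposition.transpose x a ` (C - {a}) = C - {a}"
    using assms(1) by (intro transpose_image_eq) blast
  then show ?thesis
    using assms(2) by (metis image_insert insert_Diff transpose_apply_second)
qed

locale radial_metric =
  fixes M :: "'a set" and d :: "'a \<Rightarrow> 'a \<Rightarrow> real"
    and r :: "'a \<Rightarrow> real" and g :: "real \<Rightarrow> real \<Rightarrow> real"
  assumes dist_radial: "x \<in> M \<Longrightarrow> y \<in> M \<Longrightarrow> x \<noteq> y \<Longrightarrow> d x y = g (r x) (r y)"
    and dist_self: "x \<in> M \<Longrightarrow> d x x = 0"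
    and radius_nonneg: "x \<in> M \<Longrightarrow> 0 \<le> r x"
    and g_commute: "g s t = g t s"
    and g_strict_mono:
      "0 \<le> s \<Longrightarrow> s \<le> s' \<Longrightarrow> 0 \<le> t \<Longrightarrow> t \<le> t' \<Longrightarrow> s < s' \<or> t < t' \<Longrightarrow> g s t < g s' t'"
begin

lemma g_mono: "0 \<le> s \<Longrightarrow> s \<le> s' \<Longrightarrow> 0 \<le> t \<Longrightarrow> t \<le> t' \<Longrightarrow> g s t \<le> g s' t'"
  using g_strict_mono[of s s' t t'] by (cases "s < s' \<or> t < t'") (auto simp: less_imp_le)

lemma g_le_imp_le:
  assumes "0 \<le> s" "s \<le> s'" "0 \<le> t" "g s' t' \<le> g s t"
  shows "t' \<le> t"
  using g_strict_mono[of s s' t t'] assms by force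

lemma g_le_imp_less:
  assumes "0 \<le> s" "s < s'" "0 \<le> t" "g s' t' \<le> g s t"
  shows "t' < t"
  using g_strict_mono[of s s' t t'] assms by force

lemma isometry_of_transpose:
  assumes "x \<in> M" "y \<in> M" "r x = r y"
  shows "isometry_of d M (Transposition.transpose x y)"
  unfolding isometry_of_def
proof
  show "bij_betw (Transposition.transpose x y) M M"
    using assms by simp
  have in_M: "Transposition.transpose x y z \<in> M" if "z \<in> M" for z
    using assms that by (simp add: Transposition.transpose_def)
  have radius: "r (Transposition.transpose x y z) = r z" for z
    using assms by (simp add: Transposition.transpose_def)
  show "\<forall>u\<in>M. \<forall>v\<in>M. d (Transposition.transpose x y u) (Transposition.transpose x y v) = d u v"
  proof (intro ballI)
    fix u v assume uv: "u \<in> M" "v \<in> M"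
    show "d (Transposition.transpose x y u) (Transposition.transpose x y v) = d u v"
    proof (cases "u = v")
      case False
      then have "Transposition.transpose x y u \<noteq> Transposition.transpose x y v"
        by (auto dest: transpose_eq_imp_eq)
      then show ?thesis
        using dist_radial[OF in_M[OF uv(1)] in_M[OF uv(2)]] dist_radial[OF uv False] radius
        by simp
    qed (simp add: uv dist_self in_M)
  qed
qed

context
  fixes C a b
  assumes C_subset: "C \<subseteq> M" and finite_C: "finite C"
    and largest: "\<And>x c. x \<in> M - C \<Longrightarrow> c \<in> C \<Longrightarrow> r x \<le> r c"
    and a_in: "a \<in> C" and a_min: "\<And>c. c \<in> C \<Longrightarrow> r a \<le> r c"
    and b_in: "b \<in> C - {a}" and b_min: "\<And>c. c \<in> C - {a} \<Longrightarrow> r b \<le> r c"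
begin

lemma C_in_M: "c \<in> C \<Longrightarrow> c \<in> M"
  using C_subset by blast

lemma radius_outside_le: "x \<in> M \<Longrightarrow> x \<notin> C \<Longrightarrow> r x \<le> r a"
  using largest a_in by blast

lemma radii_two_smallest: "0 \<le> r a" "r a \<le> r b"
  using radius_nonneg a_in a_min b_in C_subset by auto

lemma min_dist_largest: "min_dist d C = g (r a) (r b)"
proof -
  have g_le: "g (r a) (r b) \<le> g (r u) (r v)" if "u \<in> C" "v \<in> C - {a}" for u v
    using that radii_two_smallest by (intro g_mono a_min b_min) auto
  have "d a b \<le> d u v" if uv: "u \<in> C" "v \<in> C" "u \<noteq> v" for u v
  proof -
    have "g (r a) (r b) \<le> g (r u) (r v)"
    proof (cases "v = a")
      case True
      then show ?thesis
        using uv g_le[of v u] g_commute[of "r u" "r v"] by simp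
    qed (use uv g_le[of u v] in simp)
    then show ?thesis
      using uv a_in b_in dist_radial[OF C_in_M C_in_M] by auto
  qed
  then have "min_dist d C = d a b"
    using finite_C a_in b_in by (intro min_dist_eqI) auto
  then show ?thesis
    using a_in b_in dist_radial[OF C_in_M C_in_M] by auto
qed

lemma min_dist_le_largest:
  assumes D: "D \<subseteq> M" "finite D" "card D = card C"
  shows "min_dist d D \<le> g (r a) (r b)"
proof (cases "D \<subseteq> C")
  case True
  then show ?thesis
    using card_subset_eq[OF finite_C True] D min_dist_largest by simp
next
  case False
  then obtain x where x: "x \<in> D" "x \<notin> C" by auto
  have xM: "x \<in> M"
    using x D by auto
  have "\<exists>y \<in> D - {x}. r y \<le> r b"
  proof (cases "D - {x} \<subseteq> C - {a}")
    case True
    moreover have "card (D - {x}) = card (C - {a})"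
      using x D a_in finite_C by simp
    ultimately have "D - {x} = C - {a}"
      using finite_C by (intro card_subset_eq) auto
    then show ?thesis using b_in by auto
  next
    case False
    then obtain y where y: "y \<in> D - {x}" "y \<notin> C - {a}" by auto
    have "r y \<le> r a"
    proof (cases "y = a")
      case False
      then show ?thesis
        using y D by (intro radius_outside_le) auto
    qed simp
    then have "r y \<le> r b"
      using radii_two_smallest by linarith
    then show ?thesis
      using y(1) by blast
  qed
  then obtain y where y: "y \<in> D - {x}" "r y \<le> r b" by auto
  have yM: "y \<in> M"
    using y D by auto
  have "min_dist d D \<le> d x y"
    using D x y by (intro min_dist_le) auto
  also have "\<dots> = g (r x) (r y)"
    using xM yM y by (intro dist_radial) auto
  also have "\<dots> \<le> g (r a) (r b)"
    using y radius_outside_le[OF xM x(2)] radius_nonneg[OF xM] radius_nonneg[OF yM]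
    by (intro g_mono) auto
  finally show ?thesis .
qed

lemma optimal_code_largest: "optimal_code d M (card C) C"
  unfolding optimal_code_def
  using C_subset finite_C min_dist_le_largest min_dist_largest by auto

lemma two_le_card: "2 \<le> card C"
  using card_mono[OF finite_C, of "{a, b}"] a_in b_in by auto

context
  fixes D x
  assumes D_opt: "optimal_code d M (card C) D" and x_in: "x \<in> D" and x_notin: "x \<notin> C"
begin

lemma D_code: "D \<subseteq> M" "finite D" "card D = card C"
  using D_opt unfolding optimal_code_def by auto

lemma x_in_M: "x \<in> M"
  using x_in D_code by auto

lemma radius_x: "0 \<le> r x" "r x \<le> r a"
  using radius_nonneg[OF x_in_M] radius_outside_le[OF x_in_M x_notin] by auto

lemma card_D_minus_x: "card (D - {x}) = card C - 1"
  using x_in D_code by simp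

lemma other_in_M: "v \<in> D - {x} \<Longrightarrow> v \<in> M"
  using D_code by auto

lemma g_le_radius_x:
  assumes "v \<in> D - {x}"
  shows "g (r a) (r b) \<le> g (r x) (r v)"
proof -
  have "min_dist d C \<le> min_dist d D"
    using D_opt C_subset finite_C unfolding optimal_code_def by auto
  also have "\<dots> \<le> d x v"
    using assms x_in D_code by (intro min_dist_le) auto
  also have "\<dots> = g (r x) (r v)"
    using assms by (intro dist_radial x_in_M other_in_M) auto
  finally show ?thesis
    using min_dist_largest by simp
qed

text \<open>A point of radius below \<open>r a\<close> forces all other points of D beyond \<open>r b\<close>, into
  \<open>C - {a, b}\<close>, which is too small.\<close>

lemma radius_x_eq: "r x = r a"
proof (rule ccontr)
  assume "r x \<noteq> r a"
  then have less: "r x < r a"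
    using radius_x by simp
  have "v \<in> C - {a, b}" if v: "v \<in> D - {x}" for v
  proof -
    have "r b < r v"
      using g_le_imp_less[OF radius_x(1) less _ g_le_radius_x[OF v]]
        radius_nonneg[OF other_in_M[OF v]] by blast
    moreover have "r v \<le> r b" if "v \<notin> C"
      using radius_outside_le[OF other_in_M[OF v] that] radii_two_smallest by linarith
    ultimately show ?thesis
      using radii_two_smallest by auto
  qed
  then have "card (D - {x}) \<le> card (C - {a, b})"
    using finite_C by (intro card_mono) auto
  also have "\<dots> = card C - 2"
    using a_in b_in finite_C by (auto simp: card_Diff_subset)
  finally show False
    using card_D_minus_x two_le_card by linarith
qed

lemma D_minus_x_eq:
  assumes at_most_two: "\<And>x y z. x \<in> M \<Longrightarrow> y \<in> M \<Longrightarrow> z \<in> M \<Longrightarrow> r x = r y \<Longrightarrow> r y = r z \<Longrightarrow>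
      x = y \<or> y = z \<or> x = z"
  shows "D - {x} = C - {a}"
proof -
  have "r a < r b"
  proof (rule ccontr)
    assume "\<not> r a < r b"
    then have "r a = r b"
      using radii_two_smallest by linarith
    then show False
      using at_most_two[OF x_in_M C_in_M C_in_M, of a b] radius_x_eq a_in b_in x_notin by auto
  qed
  have "v \<in> C - {a}" if v: "v \<in> D - {x}" for v
  proof -
    have "r b \<le> r v"
      using g_le_imp_le[OF radius_x _ g_le_radius_x[OF v]]
        radius_nonneg[OF other_in_M[OF v]] by blast
    moreover have "r v \<le> r a" if "v \<notin> C"
      using radius_outside_le[OF other_in_M[OF v] that] .
    ultimately show ?thesis
      using \<open>r a < r b\<close> by auto
  qed
  then show ?thesis
    using card_D_minus_x a_in finite_C by (intro card_subset_eq) auto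
qed

end

lemma optimal_code_isometric_to_largest:
  assumes at_most_two: "\<And>x y z. x \<in> M \<Longrightarrow> y \<in> M \<Longrightarrow> z \<in> M \<Longrightarrow> r x = r y \<Longrightarrow> r y = r z \<Longrightarrow>
      x = y \<or> y = z \<or> x = z"
    and D_opt: "optimal_code d M (card C) D"
  shows "\<exists>f. isometry_of d M f \<and> f ` C = D"
proof (cases "D \<subseteq> C")
  case True
  then have "D = C"
    using card_subset_eq[OF finite_C True] D_opt unfolding optimal_code_def by simp
  moreover have "isometry_of d M id"
    unfolding isometry_of_def by simp
  ultimately show ?thesis by auto
next
  case False
  then obtain x where x: "x \<in> D" "x \<notin> C" by auto
  have "Transposition.transpose x a ` C = insert x (C - {a})"
    using x(2) a_in by (rule transpose_image_exchange)
  also have "\<dots> = D"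
    using D_minus_x_eq[OF D_opt x at_most_two] x(1) by blast
  finally have "Transposition.transpose x a ` C = D" .
  moreover have "isometry_of d M (Transposition.transpose x a)"
    using x_in_M[OF D_opt x] C_in_M[OF a_in] radius_x_eq[OF D_opt x]
    by (rule isometry_of_transpose)
  ultimately show ?thesis by blast
qed
end

theorem largest_radii_optimal_unique:
  assumes C: "C \<subseteq> M" "finite C" "card C = n" "2 \<le> n"
    and largest: "\<And>x c. x \<in> M - C \<Longrightarrow> c \<in> C \<Longrightarrow> r x \<le> r c"
    and at_most_two: "\<And>x y z. x \<in> M \<Longrightarrow> y \<in> M \<Longrightarrow> z \<in> M \<Longrightarrow> r x = r y \<Longrightarrow> r y = r z \<Longrightarrow>
      x = y \<or> y = z \<or> x = z"
  shows "optimal_code d M n C \<and> unique_up_to_isometry d M n C"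
proof -
  have "C \<noteq> {}"
    using C by auto
  then obtain a where a: "a \<in> C" "\<And>c. c \<in> C \<Longrightarrow> r a \<le> r c"
    using ex_min_on_finite[OF C(2), of r] by blast
  have "0 < card (C - {a})"
    using a C by simp
  then have "finite (C - {a})" "C - {a} \<noteq> {}"
    unfolding card_gt_0_iff by blast+
  then obtain b where b: "b \<in> C - {a}" "\<And>c. c \<in> C - {a} \<Longrightarrow> r b \<le> r c"
    using ex_min_on_finite[of "C - {a}" r] by blast
  show ?thesis
    unfolding unique_up_to_isometry_def C(3)[symmetric]
    using optimal_code_largest[OF C(1,2) largest a b]
      optimal_code_isometric_to_largest[OF C(1,2) largest a b at_most_two] by blast
qed

end

section \<open>The points of M as scaled basis vectors\<close>

definition spike :: "nat \<Rightarrow> real \<Rightarrow> nat \<Rightarrow> real" where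
  "spike c s = (\<lambda>i. if i = c then s else 0)"

lemma lp_dist_finite_support:
  assumes "finite S" "\<And>i. i \<notin> S \<Longrightarrow> x i = y i"
  shows "lp_dist p x y = (\<Sum>i\<in>S. \<bar>x i - y i\<bar> powr p) powr (1 / p)"
proof -
  have "(\<Sum>\<^sub>\<infinity>i. \<bar>x i - y i\<bar> powr p) = (\<Sum>\<^sub>\<infinity>i\<in>S. \<bar>x i - y i\<bar> powr p)"
    using assms(2) by (intro infsum_cong_neutral) auto
  then show ?thesis
    using assms(1) by (simp add: lp_dist_def)
qed

lemma lp_dist_spike_spike:
  assumes "c \<noteq> c'"
  shows "lp_dist p (spike c s) (spike c' t) = (\<bar>s\<bar> powr p + \<bar>t\<bar> powr p) powr (1 / p)"
  using assms by (subst lp_dist_finite_support[of "{c, c'}"]) (auto simp: spike_def)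

lemma lp_norm_spike:
  assumes "p \<noteq> 0"
  shows "lp_norm p (spike c s) = \<bar>s\<bar>"
  unfolding lp_norm_def using assms
  by (subst lp_dist_finite_support[of "{c}"]) (auto simp: spike_def powr_powr)

text \<open>The points \<open>e_(k,+1)/k\<close> and \<open>e_(k,-1)/k\<close> of M are \<open>atom (2k - 1)\<close> and \<open>atom (2k)\<close>;
  since \<open>1 / 0 = 0\<close>, \<open>atom 0\<close> is the origin.\<close>

definition atom_weight :: "nat \<Rightarrow> real" where
  "atom_weight c = 1 / real ((c + 1) div 2)"

definition atom :: "nat \<Rightarrow> nat \<Rightarrow> real" where
  "atom c = spike c (atom_weight c)"

lemma atom_weight_nonneg: "0 \<le> atom_weight c"
  by (simp add: atom_weight_def)

lemma atom_weight_eq_iff: "atom_weight c = atom_weight c' \<longleftrightarrow> (c + 1) div 2 = (c' + 1) div 2"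
  by (simp add: atom_weight_def)

lemma nat_eq_half_up_cases: "(c::nat) = 2 * ((c + 1) div 2) - 1 \<or> c = 2 * ((c + 1) div 2)"
  by linarith

lemma three_atom_weights_eq:
  assumes "atom_weight c1 = atom_weight c2" "atom_weight c2 = atom_weight c3"
  shows "c1 = c2 \<or> c2 = c3 \<or> c1 = c3"
  using assms nat_eq_half_up_cases[of c1] nat_eq_half_up_cases[of c2] nat_eq_half_up_cases[of c3]
  unfolding atom_weight_eq_iff by linarith

lemma atom_0: "atom 0 = (\<lambda>_. 0)"
  by (simp add: atom_def spike_def atom_weight_def fun_eq_iff)

lemma scaled_e_pm_eq_atom:
  assumes "1 \<le> k"
  shows "(\<lambda>i. (1 / real k) * e_pm k s i) = atom (if s then 2 * k - 1 else 2 * k)"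
proof -
  have "(2 * k - 1 + 1) div 2 = k" "(2 * k + 1) div 2 = k"
    using assms by auto
  then show ?thesis
    by (auto simp: atom_def spike_def atom_weight_def e_pm_def std_e_def fun_eq_iff)
qed

lemma space_M_subset_range_atom: "space_M N \<subseteq> range atom"
proof -
  have "(\<lambda>i. (1 / real k) * e_pm k s i) \<in> range atom" for k s
  proof (cases "k = 0")
    case True
    then have "(\<lambda>i. (1 / real k) * e_pm k s i) = atom 0"
      by (simp add: atom_0)
    then show ?thesis by (metis rangeI)
  next
    case False
    then show ?thesis
      using scaled_e_pm_eq_atom[of k s] by (metis rangeI less_one not_le)
  qed
  moreover have "(\<lambda>_. 0) \<in> range atom"
    using atom_0 by (metis rangeI)
  ultimately show ?thesis
    unfolding space_M_def by blast
qed

lemma lp_norm_atom: "p \<noteq> 0 \<Longrightarrow> lp_norm p (atom c) = atom_weight c"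
  by (simp add: atom_def lp_norm_spike atom_weight_nonneg)

lemma lp_dist_atoms:
  "c \<noteq> c' \<Longrightarrow> lp_dist p (atom c) (atom c') = (atom_weight c powr p + atom_weight c' powr p) powr (1 / p)"
  by (simp add: atom_def lp_dist_spike_spike atom_weight_nonneg)

lemma radial_metric_atoms:
  assumes "M \<subseteq> range atom" "0 < p"
  shows "radial_metric M (lp_dist p) (lp_norm p) (\<lambda>s t. (s powr p + t powr p) powr (1 / p))"
proof unfold_locales
  fix x y assume "x \<in> M" "y \<in> M" "x \<noteq> y"
  then obtain c c' where "x = atom c" "y = atom c'" "c \<noteq> c'"
    using assms(1) by blast
  then show "lp_dist p x y = (lp_norm p x powr p + lp_norm p y powr p) powr (1 / p)"
    using assms(2) by (simp add: lp_norm_atom lp_dist_atoms)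
next
  fix x :: "nat \<Rightarrow> real"
  show "lp_dist p x x = 0"
    by (simp add: lp_dist_def)
  show "0 \<le> lp_norm p x"
    by (simp add: lp_norm_def lp_dist_def)
next
  fix s t :: real
  show "(s powr p + t powr p) powr (1 / p) = (t powr p + s powr p) powr (1 / p)"
    by (simp add: add.commute)
next
  fix s s' t t' :: real
  assume "0 \<le> s" "s \<le> s'" "0 \<le> t" "t \<le> t'" "s < s' \<or> t < t'"
  moreover have "s powr p \<le> s' powr p" "t powr p \<le> t' powr p"
    using calculation assms(2) by (auto intro: powr_mono2)
  moreover have "s powr p < s' powr p \<or> t powr p < t' powr p"
    using calculation assms(2) by (auto intro: powr_less_mono2)
  ultimately have "s powr p + t powr p < s' powr p + t' powr p"
    by linarith
  then show "(s powr p + t powr p) powr (1 / p) < (s' powr p + t' powr p) powr (1 / p)"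
    using assms(2) by (intro powr_less_mono2) auto
qed

lemma atoms_of_equal_norm:
  assumes "p \<noteq> 0" "x \<in> range atom" "y \<in> range atom" "z \<in> range atom"
    and "lp_norm p x = lp_norm p y" "lp_norm p y = lp_norm p z"
  shows "x = y \<or> y = z \<or> x = z"
proof -
  obtain c1 c2 c3 where "x = atom c1" "y = atom c2" "z = atom c3"
    using assms(2-4) by blast
  then show ?thesis
    using assms(1,5,6) three_atom_weights_eq[of c1 c2 c3] by (auto simp: lp_norm_atom)
qed

theorem lemma4p19:
  fixes p :: real and N :: "nat set" and n :: nat and C :: "(nat \<Rightarrow> real) set"
  assumes "1 \<le> p"
    and "N \<noteq> {}" and "0 \<notin> N"
    and "1 < n"
    and "C \<subseteq> space_M N" and "finite C" and "card C = n"
    and "\<forall>x \<in> space_M N - C. \<forall>c \<in> C. lp_norm p x \<le> lp_norm p c"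
  shows "optimal_code (lp_dist p) (space_M N) n C \<and>
         unique_up_to_isometry (lp_dist p) (space_M N) n C"
proof -
  have M: "space_M N \<subseteq> range atom"
    by (rule space_M_subset_range_atom)
  interpret radial_metric "space_M N" "lp_dist p" "lp_norm p" "\<lambda>s t. (s powr p + t powr p) powr (1 / p)"
    using M assms(1) by (intro radial_metric_atoms) auto
  show ?thesis
  proof (rule largest_radii_optimal_unique[OF assms(5-7)])
    fix x y z assume "x \<in> space_M N" "y \<in> space_M N" "z \<in> space_M N"
      and "lp_norm p x = lp_norm p y" "lp_norm p y = lp_norm p z"
    then show "x = y \<or> y = z \<or> x = z"
      using M assms(1) by (intro atoms_of_equal_norm[of p]) auto
  qed (use assms(4,8) in auto)
qed

end
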